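(* Let $\mathfrak a$ be a primary monomial ideal in a polynomial ring $\Bbbk[x_1,\ldots,x_n]$ over a field $\Bbbk$, and let $I'$ be a polarization of $\mathfrak a$. Then the Stanley--Reisner complex of $I'$ is vertex-decomposable.
   Context: A monomial ideal $\mathfrak a$ is primary if $R/\mathfrak a$ has a unique associated prime; equivalently, if $\mathfrak p=\sqrt{\mathfrak a}$ (generated by a subset of the variables) and no minimal monomial generator of $\mathfrak a$ is divisible by a variable not in $\mathfrak p$. A polarization of a monomial ideal $\mathfrak a$ is the squarefree monomial ideal in a polynomial ring with variables $x_{i,j}$ generated by the monomials $\prod_{i=1}^n\prod_{j=1}^{a_i}x_{i,j}$, one for each minimal monomial generator $x_1^{a_1}\cdots x_n^{a_n}$ of $\mathfrak a$. The Stanley--Reisner complex of a squarefree monomial ideal $I$ on vertex set $V$ (the variables) is the simplicial complex of subsets $F\subseteq V$ with $\prod_{x\in F}x\notin I$. For a simplicial complex $\Delta$ on $V$ and $x\in V$: $\operatorname{del}_\Delta(x)=\Delta|_{V\setminus\{x\}}=\{F\in\Delta: x\notin F\}$ and $\operatorname{link}_\Delta(x)=\{F\in\Delta: x\notin F,\ F\cup\{x\}\in\Delta\}$. A $d$-dimensional simplicial complex $\Delta$ is vertex-decomposable if it is pure and either $\Delta$ is a $d$-simplex, or there is a vertex $x$ such that $\operatorname{link}_\Delta(x)$ is $(d-1)$-dimensional and vertex-decomposable and $\operatorname{del}_\Delta(x)$ is $d$-dimensional and vertex-decomposable. *)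

theory Defs
  imports Main
begin

text \<open>A monomial x_1^a_1 ... x_n^a_n is represented by its exponent vector
  a :: nat => nat with a i = 0 for i outside {1..n}.  A monomial ideal is
  determined by the set of monomials it contains; this set is closed under
  multiplication by monomials (i.e. upward closed w.r.t. divisibility).
  The ideal is proper iff it does not contain the monomial 1.\<close>

definition monomials :: "nat \<Rightarrow> (nat \<Rightarrow> nat) set" where
  "monomials n = {a. \<forall>i. i \<notin> {1..n} \<longrightarrow> a i = 0}"

definition mon_dvd :: "(nat \<Rightarrow> nat) \<Rightarrow> (nat \<Rightarrow> nat) \<Rightarrow> bool" where
  "mon_dvd a b \<longleftrightarrow> (\<forall>i. a i \<le> b i)"

definition monomial_ideal :: "nat \<Rightarrow> (nat \<Rightarrow> nat) set \<Rightarrow> bool" where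
  "monomial_ideal n A \<longleftrightarrow> A \<subseteq> monomials n \<and>
     (\<forall>a\<in>A. \<forall>b\<in>monomials n. mon_dvd a b \<longrightarrow> b \<in> A)"

definition min_gens :: "(nat \<Rightarrow> nat) set \<Rightarrow> (nat \<Rightarrow> nat) set" where
  "min_gens A = {a \<in> A. \<forall>b\<in>A. mon_dvd b a \<longrightarrow> b = a}"

definition mon_radical :: "(nat \<Rightarrow> nat) set \<Rightarrow> (nat \<Rightarrow> nat) set" where
  "mon_radical A = {m. \<exists>k\<ge>1. (\<lambda>i. k * m i) \<in> A}"

text \<open>Primary monomial ideal: the radical is generated by a set P of variables
  (i.e. a monomial lies in the radical iff it is divisible by some x_i, i in P),
  and no minimal generator is divisible by a variable outside P.\<close>
definition primary_monomial_ideal :: "nat \<Rightarrow> (nat \<Rightarrow> nat) set \<Rightarrow> bool" where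
  "primary_monomial_ideal n A \<longleftrightarrow> monomial_ideal n A \<and>
     (\<lambda>_. 0) \<notin> A \<and>
     (\<exists>P\<subseteq>{1..n}.
        (\<forall>m\<in>monomials n. m \<in> mon_radical A \<longleftrightarrow> (\<exists>i\<in>P. 0 < m i)) \<and>
        (\<forall>g\<in>min_gens A. \<forall>i. i \<notin> P \<longrightarrow> g i = 0))"

text \<open>Squarefree monomials in the variables x_{i,j} are represented by sets of
  index pairs (i,j).\<close>
definition polarize_mon :: "nat \<Rightarrow> (nat \<Rightarrow> nat) \<Rightarrow> (nat \<times> nat) set" where
  "polarize_mon n a = {(i, j). i \<in> {1..n} \<and> 1 \<le> j \<and> j \<le> a i}"

definition polarization_gens :: "nat \<Rightarrow> (nat \<Rightarrow> nat) set \<Rightarrow> (nat \<times> nat) set set" where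
  "polarization_gens n A = polarize_mon n ` min_gens A"

definition polarization_vars :: "nat \<Rightarrow> (nat \<Rightarrow> nat) set \<Rightarrow> (nat \<times> nat) set" where
  "polarization_vars n A = \<Union> (polarization_gens n A)"

text \<open>For a squarefree monomial ideal given by squarefree generators G on vertex
  set V: a squarefree monomial prod_{x in F} x lies in the ideal iff it is
  divisible by some generator.\<close>
definition sqfree_in_ideal :: "'v set set \<Rightarrow> 'v set \<Rightarrow> bool" where
  "sqfree_in_ideal G F \<longleftrightarrow> (\<exists>g\<in>G. g \<subseteq> F)"

definition stanley_reisner :: "'v set \<Rightarrow> 'v set set \<Rightarrow> 'v set set" where
  "stanley_reisner V G = {F. F \<subseteq> V \<and> \<not> sqfree_in_ideal G F}"

definition sc_dim :: "'v set set \<Rightarrow> int" where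
  "sc_dim \<Delta> = int (Max (card ` \<Delta>)) - 1"

definition facets :: "'v set set \<Rightarrow> 'v set set" where
  "facets \<Delta> = {F \<in> \<Delta>. \<forall>G\<in>\<Delta>. F \<subseteq> G \<longrightarrow> G = F}"

definition pure :: "'v set set \<Rightarrow> bool" where
  "pure \<Delta> \<longleftrightarrow> (\<forall>F\<in>facets \<Delta>. int (card F) - 1 = sc_dim \<Delta>)"

definition del :: "'v set set \<Rightarrow> 'v \<Rightarrow> 'v set set" where
  "del \<Delta> x = {F \<in> \<Delta>. x \<notin> F}"

definition link :: "'v set set \<Rightarrow> 'v \<Rightarrow> 'v set set" where
  "link \<Delta> x = {F \<in> \<Delta>. x \<notin> F \<and> insert x F \<in> \<Delta>}"

text \<open>A simplex is the power set of a finite set (the (-1)-simplex is {{}}).\<close>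
inductive vertex_decomposable :: "'v set set \<Rightarrow> bool" where
  simplex: "finite F \<Longrightarrow> vertex_decomposable (Pow F)"
| step: "\<lbrakk> pure \<Delta>; {x} \<in> \<Delta>;
           sc_dim (link \<Delta> x) = sc_dim \<Delta> - 1; vertex_decomposable (link \<Delta> x);
           sc_dim (del \<Delta> x) = sc_dim \<Delta>; vertex_decomposable (del \<Delta> x) \<rbrakk>
         \<Longrightarrow> vertex_decomposable \<Delta>"

end

theory Submission
  imports Defs
begin

text \<open>Let the radical of the primary monomial ideal \<open>A\<close> be generated by the variables
  \<open>x i\<close>, \<open>i \<in> P\<close>. Its minimal generators involve only these variables, and among them are the
  pure powers \<open>(\<lambda>_. 0)(i := L i)\<close>. Hence the vertices of the polarization form the rows
  \<open>(i, 1), \<dots>, (i, L i)\<close>, and a set \<open>F\<close> of vertices contains no polarized generator iff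
  there is an exponent vector \<open>c \<ge> 1\<close> strictly dominating no minimal generator (i.e. the
  monomial with exponents \<open>c - 1\<close> is not in \<open>A\<close>) such that \<open>F\<close> misses the vertex \<open>(i, c i)\<close>
  of every row.

  Complexes of this staircase shape are vertex-decomposable by induction on the total length
  of the rows: deleting the lowest vertex of a row turns the rest of that row into cone points,
  and its link shortens the row from below; both are again staircase complexes, of the
  dimensions required, since every facet misses exactly one vertex per row.\<close>

definition admissible_points ::
  "'i set \<Rightarrow> ('i \<Rightarrow> nat) \<Rightarrow> ('i \<Rightarrow> nat) \<Rightarrow> ('i \<Rightarrow> nat) set \<Rightarrow> ('i \<Rightarrow> nat) set" where
  "admissible_points P lo hi S = {c \<in> S. lo \<le> c \<and> (\<forall>i\<in>P. c i < hi i)}"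

definition down_closed :: "'a::order set \<Rightarrow> bool" where
  "down_closed S \<longleftrightarrow> (\<forall>b\<in>S. \<forall>b'. b' \<le> b \<longrightarrow> b' \<in> S)"

text \<open>Row \<open>i \<in> P\<close> consists of the vertices \<open>(i, k)\<close>, \<open>lo i \<le> k < hi i\<close>, assumed to lie in \<open>V\<close>;
  the other vertices of \<open>V\<close> are cone points.\<close>

definition staircase_complex ::
  "('i \<times> nat) set \<Rightarrow> 'i set \<Rightarrow> ('i \<Rightarrow> nat) \<Rightarrow> ('i \<Rightarrow> nat) \<Rightarrow> ('i \<Rightarrow> nat) set
     \<Rightarrow> ('i \<times> nat) set set" where
  "staircase_complex V P lo hi S =
     {F. F \<subseteq> V \<and> (\<exists>c\<in>admissible_points P lo hi S. \<forall>i\<in>P. (i, c i) \<notin> F)}"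

lemma staircase_facet_in:
  assumes "c \<in> admissible_points P lo hi S"
  shows "V - (\<lambda>i. (i, c i)) ` P \<in> staircase_complex V P lo hi S"
  using assms unfolding staircase_complex_def by blast

lemma staircase_face_subset_facet:
  assumes "F \<in> staircase_complex V P lo hi S"
  obtains c where "c \<in> admissible_points P lo hi S" "F \<subseteq> V - (\<lambda>i. (i, c i)) ` P"
  using assms unfolding staircase_complex_def by blast

lemma card_staircase_facet:
  assumes "finite V" "(SIGMA i:P. {lo i..<hi i}) \<subseteq> V" "c \<in> admissible_points P lo hi S"
  shows "card (V - (\<lambda>i. (i, c i)) ` P) = card V - card P" and "card P \<le> card V"
proof -
  have sub: "(\<lambda>i. (i, c i)) ` P \<subseteq> V"
    using assms(2,3) by (auto simp: admissible_points_def le_fun_def)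
  have card_graph: "card ((\<lambda>i. (i, c i)) ` P) = card P"
    by (rule card_image) (auto intro: inj_onI)
  show "card (V - (\<lambda>i. (i, c i)) ` P) = card V - card P"
    using card_Diff_subset[OF finite_subset[OF sub assms(1)] sub] card_graph by simp
  show "card P \<le> card V"
    using card_mono[OF assms(1) sub] card_graph by simp
qed

lemma sc_dim_staircase_complex:
  assumes "finite V" "(SIGMA i:P. {lo i..<hi i}) \<subseteq> V" "admissible_points P lo hi S \<noteq> {}"
  shows "sc_dim (staircase_complex V P lo hi S) = int (card V) - int (card P) - 1"
proof -
  let ?K = "staircase_complex V P lo hi S"
  obtain c where c: "c \<in> admissible_points P lo hi S" using assms(3) by blast
  have "finite ?K"
    by (rule finite_subset[of _ "Pow V"]) (use assms(1) in \<open>auto simp: staircase_complex_def\<close>)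
  moreover have "card F \<le> card V - card P" if F: "F \<in> ?K" for F
  proof -
    obtain c' where c': "c' \<in> admissible_points P lo hi S" "F \<subseteq> V - (\<lambda>i. (i, c' i)) ` P"
      using staircase_face_subset_facet[OF F] by blast
    have "card F \<le> card (V - (\<lambda>i. (i, c' i)) ` P)"
      using c'(2) assms(1) by (intro card_mono) auto
    then show ?thesis
      using card_staircase_facet(1)[OF assms(1,2) c'(1)] by simp
  qed
  moreover have "card V - card P \<in> card ` ?K"
    using staircase_facet_in[OF c] card_staircase_facet(1)[OF assms(1,2) c] by (metis image_eqI)
  ultimately have "Max (card ` ?K) = card V - card P"
    by (intro Max_eqI) auto
  then show ?thesis
    using card_staircase_facet(2)[OF assms(1,2) c] by (simp add: sc_dim_def of_nat_diff)
qed

lemma pure_staircase_complex: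
  assumes "finite V" "(SIGMA i:P. {lo i..<hi i}) \<subseteq> V"
  shows "pure (staircase_complex V P lo hi S)"
  unfolding pure_def
proof
  fix F assume F: "F \<in> facets (staircase_complex V P lo hi S)"
  then have FK: "F \<in> staircase_complex V P lo hi S"
    and maximal: "\<And>G. G \<in> staircase_complex V P lo hi S \<Longrightarrow> F \<subseteq> G \<Longrightarrow> G = F"
    by (auto simp: facets_def)
  obtain c where c: "c \<in> admissible_points P lo hi S" "F \<subseteq> V - (\<lambda>i. (i, c i)) ` P"
    by (rule staircase_face_subset_facet[OF FK])
  have "F = V - (\<lambda>i. (i, c i)) ` P"
    using maximal[OF staircase_facet_in[OF c(1)] c(2)] by simp
  moreover have "sc_dim (staircase_complex V P lo hi S) = int (card V) - int (card P) - 1"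
    using sc_dim_staircase_complex[OF assms] c(1) by blast
  ultimately show "int (card F) - 1 = sc_dim (staircase_complex V P lo hi S)"
    using card_staircase_facet[OF assms c(1)] by (simp add: of_nat_diff)
qed

lemma del_staircase_complex:
  assumes "i \<in> P" "lo i < hi i" "down_closed S"
  shows "del (staircase_complex V P lo hi S) (i, lo i)
           = staircase_complex (V - {(i, lo i)}) (P - {i}) lo hi S"
proof (intro set_eqI iffI)
  fix F assume "F \<in> del (staircase_complex V P lo hi S) (i, lo i)"
  then show "F \<in> staircase_complex (V - {(i, lo i)}) (P - {i}) lo hi S"
    unfolding del_def staircase_complex_def admissible_points_def by blast
next
  fix F assume "F \<in> staircase_complex (V - {(i, lo i)}) (P - {i}) lo hi S"
  then obtain c where F: "F \<subseteq> V - {(i, lo i)}" and c: "c \<in> admissible_points (P - {i}) lo hi S"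
    and avoid: "\<forall>k\<in>P - {i}. (k, c k) \<notin> F"
    unfolding staircase_complex_def by blast
  \<comment> \<open>lowering the witness to the bottom of row i lets it avoid the deleted vertex\<close>
  have "c(i := lo i) \<le> c"
    using c by (simp add: admissible_points_def le_fun_def)
  then have "c(i := lo i) \<in> admissible_points P lo hi S"
    using c assms unfolding down_closed_def by (auto simp: admissible_points_def le_fun_def)
  moreover have "\<forall>k\<in>P. (k, (c(i := lo i)) k) \<notin> F"
    using avoid F by auto
  ultimately show "F \<in> del (staircase_complex V P lo hi S) (i, lo i)"
    using F unfolding del_def staircase_complex_def by blast
qed

lemma admissible_points_fun_upd_Suc:
  "c \<in> admissible_points P (lo(i := Suc (lo i))) hi S
     \<longleftrightarrow> c \<in> admissible_points P lo hi S \<and> c i \<noteq> lo i"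
proof -
  have "lo(i := Suc (lo i)) \<le> c \<longleftrightarrow> lo \<le> c \<and> c i \<noteq> lo i"
    unfolding le_fun_def
    by (metis Suc_leD Suc_leI fun_upd_apply le_antisym le_neq_implies_less not_less_eq_eq)
  then show ?thesis
    by (auto simp: admissible_points_def)
qed

lemma link_staircase_complex:
  assumes "i \<in> P" "(i, lo i) \<in> V"
  shows "link (staircase_complex V P lo hi S) (i, lo i)
           = staircase_complex (V - {(i, lo i)}) P (lo(i := Suc (lo i))) hi S"
proof (intro set_eqI iffI)
  fix F assume "F \<in> link (staircase_complex V P lo hi S) (i, lo i)"
  then have "insert (i, lo i) F \<in> staircase_complex V P lo hi S" "(i, lo i) \<notin> F"
    by (simp_all add: link_def)
  then obtain c where F: "F \<subseteq> V - {(i, lo i)}" and c: "c \<in> admissible_points P lo hi S"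
    and avoid: "\<forall>k\<in>P. (k, c k) \<notin> insert (i, lo i) F"
    unfolding staircase_complex_def by blast
  have "c \<in> admissible_points P (lo(i := Suc (lo i))) hi S"
    using c avoid assms(1) by (auto simp: admissible_points_fun_upd_Suc)
  then show "F \<in> staircase_complex (V - {(i, lo i)}) P (lo(i := Suc (lo i))) hi S"
    using F avoid unfolding staircase_complex_def by blast
next
  fix F assume "F \<in> staircase_complex (V - {(i, lo i)}) P (lo(i := Suc (lo i))) hi S"
  then obtain c where F: "F \<subseteq> V - {(i, lo i)}"
    and "c \<in> admissible_points P (lo(i := Suc (lo i))) hi S"
    and avoid: "\<forall>k\<in>P. (k, c k) \<notin> F"
    unfolding staircase_complex_def by blast
  then have c: "c \<in> admissible_points P lo hi S" "c i \<noteq> lo i"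
    by (simp_all add: admissible_points_fun_upd_Suc)
  have "\<forall>k\<in>P. (k, c k) \<notin> insert (i, lo i) F"
    using c(2) avoid by auto
  then have "insert (i, lo i) F \<in> staircase_complex V P lo hi S" "F \<in> staircase_complex V P lo hi S"
    using c F assms(2) unfolding staircase_complex_def by blast+
  then show "F \<in> link (staircase_complex V P lo hi S) (i, lo i)"
    using F unfolding link_def by blast
qed

lemma del_staircase_complex_eq_self:
  assumes "i \<in> P" "\<forall>c\<in>admissible_points P lo hi S. c i = lo i"
  shows "del (staircase_complex V P lo hi S) (i, lo i) = staircase_complex V P lo hi S"
proof -
  have "(i, lo i) \<notin> F" if F: "F \<in> staircase_complex V P lo hi S" for F
  proof -
    obtain c where "c \<in> admissible_points P lo hi S" "\<forall>k\<in>P. (k, c k) \<notin> F"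
      using F unfolding staircase_complex_def by blast
    then show ?thesis
      using assms by metis
  qed
  then show ?thesis
    unfolding del_def by blast
qed

lemma int_card_Diff_singleton:
  assumes "finite A" "x \<in> A"
  shows "int (card (A - {x})) = int (card A) - 1"
  by (simp add: card_Suc_Diff1[OF assms, symmetric])

lemma lo_less_hi_if_admissible_points:
  "c \<in> admissible_points P lo hi S \<Longrightarrow> i \<in> P \<Longrightarrow> lo i < hi i"
  by (auto simp: admissible_points_def le_fun_def intro: le_less_trans)

lemma sc_dim_del_staircase_complex:
  assumes "finite V" "(SIGMA k:P. {lo k..<hi k}) \<subseteq> V" "finite P" "i \<in> P"
    and "c \<in> admissible_points P lo hi S" "down_closed S"
  shows "sc_dim (del (staircase_complex V P lo hi S) (i, lo i)) = sc_dim (staircase_complex V P lo hi S)"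
proof -
  have row: "lo i < hi i"
    using lo_less_hi_if_admissible_points[OF assms(5,4)] .
  then have "(i, lo i) \<in> V"
    using assms(2,4) by auto
  have "(SIGMA k:P - {i}. {lo k..<hi k}) \<subseteq> V - {(i, lo i)}"
    using assms(2) by auto
  moreover have "admissible_points (P - {i}) lo hi S \<noteq> {}"
    using assms(5) by (auto simp: admissible_points_def)
  ultimately have "sc_dim (staircase_complex (V - {(i, lo i)}) (P - {i}) lo hi S)
      = int (card (V - {(i, lo i)})) - int (card (P - {i})) - 1"
    using assms(1) by (intro sc_dim_staircase_complex) auto
  also have "\<dots> = sc_dim (staircase_complex V P lo hi S)"
    using sc_dim_staircase_complex[OF assms(1,2), of S] assms(5)
      int_card_Diff_singleton[OF assms(1) \<open>(i, lo i) \<in> V\<close>] int_card_Diff_singleton[OF assms(3,4)]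
    by force
  finally show ?thesis
    using del_staircase_complex[of i P lo hi S V, OF assms(4) row assms(6)] by simp
qed

lemma staircase_rows_fun_upd_Suc_subset:
  "(SIGMA k:P. {lo k..<hi k}) \<subseteq> V
     \<Longrightarrow> (SIGMA k:P. {(lo(i := Suc (lo i))) k..<hi k}) \<subseteq> V - {(i, lo i)}"
  by (auto split: if_splits)

lemma sc_dim_link_staircase_complex:
  assumes "finite V" "(SIGMA k:P. {lo k..<hi k}) \<subseteq> V" "i \<in> P"
    and "c \<in> admissible_points P lo hi S" "c i \<noteq> lo i"
  shows "sc_dim (link (staircase_complex V P lo hi S) (i, lo i))
           = sc_dim (staircase_complex V P lo hi S) - 1"
proof -
  have "(i, lo i) \<in> V"
    using lo_less_hi_if_admissible_points[OF assms(4,3)] assms(2,3) by auto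
  have "c \<in> admissible_points P (lo(i := Suc (lo i))) hi S"
    using assms(4,5) by (simp add: admissible_points_fun_upd_Suc)
  then have "sc_dim (staircase_complex (V - {(i, lo i)}) P (lo(i := Suc (lo i))) hi S)
      = int (card (V - {(i, lo i)})) - int (card P) - 1"
    using assms(1) staircase_rows_fun_upd_Suc_subset[OF assms(2)]
    by (intro sc_dim_staircase_complex) auto
  also have "\<dots> = sc_dim (staircase_complex V P lo hi S) - 1"
    using sc_dim_staircase_complex[OF assms(1,2), of S] assms(4)
      int_card_Diff_singleton[OF assms(1) \<open>(i, lo i) \<in> V\<close>]
    by force
  finally show ?thesis
    using link_staircase_complex[where lo=lo and hi=hi and S=S, OF assms(3) \<open>(i, lo i) \<in> V\<close>]
    by simp
qed

theorem vertex_decomposable_staircase_complex: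
  assumes "finite V" "finite P" "(SIGMA i:P. {lo i..<hi i}) \<subseteq> V"
    and "admissible_points P lo hi S \<noteq> {}"
    and down_closed: "down_closed S"
  shows "vertex_decomposable (staircase_complex V P lo hi S)"
  using assms(1-4)
proof (induction "\<Sum>i\<in>P. hi i - lo i" arbitrary: V P lo rule: less_induct)
  case less
  let ?K = "staircase_complex V P lo hi S"
  show ?case
  proof (cases "P = {}")
    case True
    then have "?K = Pow V"
      using less.prems(4) by (auto simp: staircase_complex_def)
    then show ?thesis
      using less.prems(1) vertex_decomposable.simplex by metis
  next
    case False
    then obtain i where i: "i \<in> P" by blast
    obtain c where c: "c \<in> admissible_points P lo hi S"
      using less.prems(4) by blast
    have row: "lo i < hi i"
      using lo_less_hi_if_admissible_points[OF c i] .
    have vd_del: "vertex_decomposable (del ?K (i, lo i))"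
    proof -
      have "(\<Sum>k\<in>P - {i}. hi k - lo k) < (\<Sum>k\<in>P. hi k - lo k)"
        using sum.remove[OF less.prems(2) i, of "\<lambda>k. hi k - lo k"] row by simp
      moreover have "(SIGMA k:P - {i}. {lo k..<hi k}) \<subseteq> V - {(i, lo i)}"
        using less.prems(3) by auto
      moreover have "admissible_points (P - {i}) lo hi S \<noteq> {}"
        using c by (auto simp: admissible_points_def)
      ultimately show ?thesis
        unfolding del_staircase_complex[of i P lo hi S V, OF i row down_closed]
        using less.hyps less.prems(1,2) by blast
    qed
    show ?thesis
    proof (cases "\<exists>c\<in>admissible_points P lo hi S. c i \<noteq> lo i")
      case False
      then have "del ?K (i, lo i) = ?K"
        using del_staircase_complex_eq_self[OF i] by blast
      with vd_del show ?thesis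
        by simp
    next
      case True
      then obtain c' where c': "c' \<in> admissible_points P lo hi S" "c' i \<noteq> lo i"
        by blast
      let ?lo = "lo(i := Suc (lo i))"
      have x: "(i, lo i) \<in> V"
        using less.prems(3) i row by auto
      have "vertex_decomposable (link ?K (i, lo i))"
      proof -
        have "(\<Sum>k\<in>P. hi k - ?lo k) < (\<Sum>k\<in>P. hi k - lo k)"
          using less.prems(2) i row by (intro sum_strict_mono_ex1) auto
        moreover have "c' \<in> admissible_points P ?lo hi S"
          using c' by (simp add: admissible_points_fun_upd_Suc)
        ultimately show ?thesis
          unfolding link_staircase_complex[where lo=lo and hi=hi and S=S, OF i x]
          using less.hyps less.prems(1,2) staircase_rows_fun_upd_Suc_subset[OF less.prems(3)]
          by blast
      qed
      moreover have "{(i, lo i)} \<in> ?K"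
        using c' x unfolding staircase_complex_def by auto
      ultimately show ?thesis
        using vertex_decomposable.step[OF pure_staircase_complex[OF less.prems(1,3)]] vd_del
          sc_dim_link_staircase_complex[OF less.prems(1,3) i c']
          sc_dim_del_staircase_complex[OF less.prems(1,3,2) i c down_closed]
        by metis
    qed
  qed
qed

lemma min_gens_exponent_le:
  assumes "g \<in> min_gens A" "(\<lambda>_. 0)(i := k) \<in> A"
  shows "g i \<le> k"
proof (rule ccontr)
  assume "\<not> g i \<le> k"
  then have "mon_dvd ((\<lambda>_. 0)(i := k)) g"
    by (auto simp: mon_dvd_def)
  then have "(\<lambda>_. 0)(i := k) = g"
    using assms unfolding min_gens_def by blast
  with \<open>\<not> g i \<le> k\<close> show False
    by auto
qed

lemma Least_pure_power_in_min_gens: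
  assumes "(\<lambda>_. 0)(i := k) \<in> A"
  shows "(\<lambda>_. 0)(i := LEAST k. (\<lambda>_. 0)(i := k) \<in> A) \<in> min_gens A"
proof -
  define L where "L = (LEAST k. (\<lambda>_. 0)(i := k) \<in> A)"
  have L_in: "(\<lambda>_. 0)(i := L) \<in> A"
    unfolding L_def using assms by (rule LeastI)
  have "b = (\<lambda>_. 0)(i := L)" if "b \<in> A" "mon_dvd b ((\<lambda>_. 0)(i := L))" for b
  proof -
    have "b t = 0" if "t \<noteq> i" for t
      using that \<open>mon_dvd b ((\<lambda>_. 0)(i := L))\<close> by (auto simp: mon_dvd_def dest: spec[of _ t])
    then have b_eq: "b = (\<lambda>_. 0)(i := b i)"
      by (auto simp: fun_eq_iff)
    then have "L \<le> b i"
      unfolding L_def using that(1) by (metis Least_le)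
    moreover have "b i \<le> L"
      using that(2) by (auto simp: mon_dvd_def dest: spec[of _ i])
    ultimately show ?thesis
      using b_eq by simp
  qed
  with L_in show ?thesis
    unfolding L_def min_gens_def by blast
qed

lemma pure_power_in_if_in_mon_radical:
  assumes "(\<lambda>_. 0)(i := 1) \<in> mon_radical A"
  shows "\<exists>k. (\<lambda>_. 0)(i := k) \<in> A"
proof -
  obtain k where "(\<lambda>t. k * ((\<lambda>_. 0)(i := 1)) t) \<in> A"
    using assms unfolding mon_radical_def by blast
  moreover have "(\<lambda>t. k * ((\<lambda>_. 0)(i := 1)) t) = (\<lambda>_. 0)(i := k)"
    by auto
  ultimately show ?thesis
    by auto
qed

locale primary_wrt =
  fixes n :: nat and A :: "(nat \<Rightarrow> nat) set" and P :: "nat set"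
  assumes variables_subset: "P \<subseteq> {1..n}"
    and one_notin: "(\<lambda>_. 0) \<notin> A"
    and pure_power_in: "i \<in> P \<Longrightarrow> \<exists>k. (\<lambda>_. 0)(i := k) \<in> A"
    and min_gens_vanish: "g \<in> min_gens A \<Longrightarrow> i \<notin> P \<Longrightarrow> g i = 0"
begin

definition pure_exponent :: "nat \<Rightarrow> nat" where
  "pure_exponent i = (LEAST k. (\<lambda>_. 0)(i := k) \<in> A)"

lemma pure_power_in_min_gens:
  "i \<in> P \<Longrightarrow> (\<lambda>_. 0)(i := pure_exponent i) \<in> min_gens A"
  unfolding pure_exponent_def using pure_power_in Least_pure_power_in_min_gens by blast

lemma min_gens_le_pure_exponent:
  "g \<in> min_gens A \<Longrightarrow> i \<in> P \<Longrightarrow> g i \<le> pure_exponent i"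
  using min_gens_exponent_le pure_power_in_min_gens unfolding min_gens_def by blast

lemma min_gens_pos_imp_variable:
  "g \<in> min_gens A \<Longrightarrow> 0 < g i \<Longrightarrow> i \<in> P"
  using min_gens_vanish by fastforce

lemma polarization_vars_eq:
  "polarization_vars n A = (SIGMA i:P. {1..<Suc (pure_exponent i)})"
proof (intro equalityI subsetI)
  fix v assume "v \<in> polarization_vars n A"
  then obtain g i j where g: "g \<in> min_gens A" and v: "v = (i, j)" "1 \<le> j" "j \<le> g i"
    unfolding polarization_vars_def polarization_gens_def polarize_mon_def by blast
  then have "i \<in> P"
    using min_gens_pos_imp_variable by simp
  with g v show "v \<in> (SIGMA i:P. {1..<Suc (pure_exponent i)})"
    using min_gens_le_pure_exponent by fastforce
next
  fix v assume "v \<in> (SIGMA i:P. {1..<Suc (pure_exponent i)})"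
  then obtain i j where v: "v = (i, j)" "i \<in> P" "1 \<le> j" "j \<le> pure_exponent i"
    by auto
  then have "v \<in> polarize_mon n ((\<lambda>_. 0)(i := pure_exponent i))"
    using variables_subset unfolding polarize_mon_def by auto
  then show "v \<in> polarization_vars n A"
    using pure_power_in_min_gens[OF v(2)]
    unfolding polarization_vars_def polarization_gens_def by blast
qed

definition non_dominating :: "(nat \<Rightarrow> nat) set" where
  "non_dominating = {c. \<forall>g\<in>min_gens A. \<exists>t. c t \<le> g t}"

lemma non_dominating_le_pure_exponent:
  assumes "c \<in> non_dominating" "(\<lambda>_. 1) \<le> c" "i \<in> P"
  shows "c i \<le> pure_exponent i"
proof -
  obtain t where "c t \<le> ((\<lambda>_. 0)(i := pure_exponent i)) t"
    using assms(1) pure_power_in_min_gens[OF assms(3)] unfolding non_dominating_def by blast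
  moreover have "1 \<le> c t"
    using assms(2) by (simp add: le_fun_def)
  ultimately show ?thesis
    by (auto split: if_splits)
qed

abbreviation admissible :: "(nat \<Rightarrow> nat) set" where
  "admissible \<equiv> admissible_points P (\<lambda>_. 1) (\<lambda>i. Suc (pure_exponent i)) non_dominating"

lemma polarize_mon_not_subset_if_admissible:
  assumes "c \<in> admissible" "\<forall>t\<in>P. (t, c t) \<notin> F" "g \<in> min_gens A"
  shows "\<not> polarize_mon n g \<subseteq> F"
proof
  assume sub: "polarize_mon n g \<subseteq> F"
  obtain t where t: "c t \<le> g t"
    using assms(1,3) unfolding admissible_points_def non_dominating_def by blast
  have "1 \<le> c t"
    using assms(1) by (simp add: admissible_points_def le_fun_def)
  then have "t \<in> P"
    using t min_gens_pos_imp_variable[OF assms(3)] by simp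
  with t \<open>1 \<le> c t\<close> have "(t, c t) \<in> polarize_mon n g"
    using variables_subset unfolding polarize_mon_def by auto
  with sub assms(2) \<open>t \<in> P\<close> show False
    by blast
qed

lemma admissible_if_no_polarize_mon_subset:
  assumes F: "F \<subseteq> polarization_vars n A"
    and no_gen: "\<forall>g\<in>min_gens A. \<not> polarize_mon n g \<subseteq> F"
  shows "\<exists>c\<in>admissible. \<forall>t\<in>P. (t, c t) \<notin> F"
proof -
  define c where "c t = (if t \<in> P then LEAST j. 0 < j \<and> (t, j) \<notin> F else 1)" for t
  have missing: "\<exists>j. 0 < j \<and> (t, j) \<notin> F" for t
    using F unfolding polarization_vars_eq by (intro exI[of _ "Suc (pure_exponent t)"]) auto
  have c_pos: "0 < c t" and c_notin: "t \<in> P \<Longrightarrow> (t, c t) \<notin> F" for t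
    unfolding c_def using LeastI_ex[OF missing[of t]] by auto
  have below_in: "(t, j) \<in> F" if "t \<in> P" "0 < j" "j < c t" for t j
    using not_less_Least[of j "\<lambda>j. 0 < j \<and> (t, j) \<notin> F"] that unfolding c_def by auto
  have "c \<in> non_dominating"
    unfolding non_dominating_def
  proof (intro CollectI ballI)
    fix g assume g: "g \<in> min_gens A"
    show "\<exists>t. c t \<le> g t"
    proof (rule ccontr)
      assume "\<not> (\<exists>t. c t \<le> g t)"
      then have g_below: "g t < c t" for t
        by (simp add: not_le)
      have "(t, j) \<in> F" if "1 \<le> j" "j \<le> g t" for t j
      proof -
        have "t \<in> P"
          using that min_gens_pos_imp_variable[OF g] by simp
        then show ?thesis
          using below_in g_below[of t] that by simp
      qed
      then have "polarize_mon n g \<subseteq> F"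
        unfolding polarize_mon_def by auto
      with no_gen g show False
        by blast
    qed
  qed
  moreover have "(\<lambda>_. 1) \<le> c"
    using c_pos by (simp add: le_fun_def Suc_le_eq)
  ultimately have "c \<in> admissible"
    using non_dominating_le_pure_exponent by (auto simp: admissible_points_def less_Suc_eq_le)
  with c_notin show ?thesis
    by blast
qed

lemma stanley_reisner_polarization_eq:
  "stanley_reisner (polarization_vars n A) (polarization_gens n A)
     = staircase_complex (polarization_vars n A) P (\<lambda>_. 1) (\<lambda>i. Suc (pure_exponent i))
         non_dominating"
proof (intro set_eqI iffI)
  fix F assume "F \<in> stanley_reisner (polarization_vars n A) (polarization_gens n A)"
  then have "F \<subseteq> polarization_vars n A" "\<forall>g\<in>min_gens A. \<not> polarize_mon n g \<subseteq> F"
    by (auto simp: stanley_reisner_def sqfree_in_ideal_def polarization_gens_def)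
  then show "F \<in> staircase_complex (polarization_vars n A) P (\<lambda>_. 1) (\<lambda>i. Suc (pure_exponent i))
         non_dominating"
    unfolding staircase_complex_def using admissible_if_no_polarize_mon_subset by blast
next
  fix F assume "F \<in> staircase_complex (polarization_vars n A) P (\<lambda>_. 1) (\<lambda>i. Suc (pure_exponent i))
         non_dominating"
  then obtain c where "F \<subseteq> polarization_vars n A" "c \<in> admissible" "\<forall>t\<in>P. (t, c t) \<notin> F"
    unfolding staircase_complex_def by blast
  then show "F \<in> stanley_reisner (polarization_vars n A) (polarization_gens n A)"
    using polarize_mon_not_subset_if_admissible
    by (auto simp: stanley_reisner_def sqfree_in_ideal_def polarization_gens_def)
qed

lemma vertex_decomposable_polarization:
  "vertex_decomposable (stanley_reisner (polarization_vars n A) (polarization_gens n A))"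
  unfolding stanley_reisner_polarization_eq
proof (rule vertex_decomposable_staircase_complex)
  show "finite P"
    using variables_subset finite_subset by blast
  then show "finite (polarization_vars n A)"
    unfolding polarization_vars_eq by blast
  show "(SIGMA i:P. {1..<Suc (pure_exponent i)}) \<subseteq> polarization_vars n A"
    unfolding polarization_vars_eq ..
  have "\<exists>t. 1 \<le> g t" if "g \<in> min_gens A" for g
  proof -
    have "g \<noteq> (\<lambda>_. 0)"
      using that one_notin unfolding min_gens_def by auto
    then show ?thesis
      by (auto simp: fun_eq_iff Suc_le_eq)
  qed
  then have "(\<lambda>_. 1) \<in> non_dominating"
    unfolding non_dominating_def by blast
  moreover have "0 < pure_exponent i" if "i \<in> P" for i
  proof (rule ccontr)
    assume "\<not> 0 < pure_exponent i"
    then have "(\<lambda>_. 0)(i := pure_exponent i) = (\<lambda>_. 0)"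
      by auto
    with pure_power_in_min_gens[OF that] one_notin show False
      unfolding min_gens_def by simp
  qed
  ultimately show "admissible \<noteq> {}"
    unfolding admissible_points_def by auto
  show "down_closed non_dominating"
    unfolding down_closed_def non_dominating_def by (fastforce simp: le_fun_def intro: order_trans)
qed

end

theorem proposition3p4:
  fixes n :: nat and A :: "(nat \<Rightarrow> nat) set"
  assumes "primary_monomial_ideal n A"
  shows "vertex_decomposable
           (stanley_reisner (polarization_vars n A) (polarization_gens n A))"
proof -
  obtain P where P: "P \<subseteq> {1..n}"
    and radical: "\<forall>m\<in>monomials n. m \<in> mon_radical A \<longleftrightarrow> (\<exists>i\<in>P. 0 < m i)"
    and vanish: "\<forall>g\<in>min_gens A. \<forall>i. i \<notin> P \<longrightarrow> g i = 0"
    using assms unfolding primary_monomial_ideal_def by blast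
  have "\<exists>k. (\<lambda>_. 0)(i := k) \<in> A" if "i \<in> P" for i
  proof (rule pure_power_in_if_in_mon_radical)
    show "(\<lambda>_. 0)(i := 1) \<in> mon_radical A"
      using radical P that unfolding monomials_def by auto
  qed
  then interpret primary_wrt n A P
    using P vanish assms unfolding primary_monomial_ideal_def by unfold_locales blast+
  show ?thesis
    by (rule vertex_decomposable_polarization)
qed

end
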